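(* Consider a non-periodic $F$-orbit containing $(0,-1)$ and $(0,1)$, with $(0,1)=F^n(0,-1)$. Let $w=w_0\cdots w_{n-1}$ be the associated positive boundary word encoding the itinerary from $(0,-1)$ to $(0,1)$, and let its rank be $2m-1$. Then: <ol> <li>The reduced word $\underline w=w_1\cdots w_{n-1}$ is a palindrome consisting of $2m-1$ blocks: $$\underline w=a^{i_1}b^{i_2}a^{i_3}\cdots a^{i_m}\cdots a^{i_3}b^{i_2}a^{i_1}$$ (letters alternating, with $i_k\ge1$). Here the middle block is a power of $a$ if $m$ is odd and a power of $b$ if $m$ is even, and $i_m+2\sum_{k=1}^{m-1}i_k=n-1$.</li> <li>$n$ is odd and $i_m$ is even if and only if the boundary segment $(0,-1),F(0,-1),\dots,F^n(0,-1)$ meets $\mathrm{Fix}(R)$ exactly once. The intersection lies in $\mathrm{dom}(\mathrm M_a)$ (resp. $\mathrm{dom}(\mathrm M_b)$), in which case $m$ is odd (resp. even).</li> <li>$n$ is even and $i_m$ is odd if and only if the boundary segment meets $\mathrm{Fix}(F\circ R)$ exactly once. The intersection lies in $\mathrm{dom}(\mathrm M_a)$ if either $i_m=1$ and $m$ is even, or $i_m>1$ and $m$ is odd; it lies in $\mathrm{dom}(\mathrm M_b)$ if either $i_m=1$ and $m$ is odd, or $i_m>1$ and $m$ is even.</li> </ol>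
   Context: For real parameters $\mathrm a,\mathrm b$, the map $F:\mathbb R^2\to\mathbb R^2$ is $F(x,y)=(\mathrm a x-y,x)$ if $x>0$ or ($x=0$ and $y\le0$), and $F(x,y)=(\mathrm b x-y,x)$ otherwise. $\mathrm{dom}(\mathrm M_a)$ is the open right half-plane together with the negative $y$-axis, and $\mathrm{dom}(\mathrm M_b)$ is its complement. $R(x,y)=(y,x)$, so $F^{-1}=RFR$. $\mathrm{Fix}(R)=\{(x,x):x\in\mathbb R\}$ and $\mathrm{Fix}(F\circ R)=\{(\tfrac{\mathrm a}{2}y,y):y>0\}\cup\{(\tfrac{\mathrm b}2y,y):y\le0\}$. Boundary segment and word: for an orbit segment $z_0=(0,-1),z_1,\dots,z_n$ of $F$ with $z_n=(0,1)$, the word is $w=w_0\cdots w_{n-1}$ with $w_t=a$ if $z_t\in\mathrm{dom}(\mathrm M_a)$ and $b$ otherwise; it is positive because $w_0=a$. The rank of $w$ is $1+|w|_{ab}+|w|_{ba}$, where $|w|_u$ counts occurrences of the factor $u$; it equals the number of half-turns around the origin. *)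

theory Defs
  imports Complex_Main
begin

datatype letter = La | Lb

definition domMa :: "(real \<times> real) set" where
  "domMa = {(x, y). x > 0 \<or> (x = 0 \<and> y \<le> 0)}"

definition domMb :: "(real \<times> real) set" where
  "domMb = - domMa"

definition F :: "real \<Rightarrow> real \<Rightarrow> real \<times> real \<Rightarrow> real \<times> real" where
  "F a b p = (case p of (x, y) \<Rightarrow>
      if (x, y) \<in> domMa then (a * x - y, x) else (b * x - y, x))"

definition Rf :: "real \<times> real \<Rightarrow> real \<times> real" where
  "Rf p = (snd p, fst p)"

definition FixR :: "(real \<times> real) set" where
  "FixR = {p. Rf p = p}"

definition FixFR :: "real \<Rightarrow> real \<Rightarrow> (real \<times> real) set" where
  "FixFR a b = {p. F a b (Rf p) = p}"

definition zpt :: "real \<Rightarrow> real \<Rightarrow> nat \<Rightarrow> real \<times> real" where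
  "zpt a b t = (F a b ^^ t) (0, -1)"

definition bword :: "real \<Rightarrow> real \<Rightarrow> nat \<Rightarrow> letter list" where
  "bword a b n = map (\<lambda>t. if zpt a b t \<in> domMa then La else Lb) [0..<n]"

definition occ :: "letter list \<Rightarrow> letter list \<Rightarrow> nat" where
  "occ u w = card {t. t + length u \<le> length w \<and> take (length u) (drop t w) = u}"

definition rank :: "letter list \<Rightarrow> nat" where
  "rank w = 1 + occ [La, Lb] w + occ [Lb, La] w"

text \<open>Index of the exponent used in block j (1 \<le> j \<le> 2m-1): i_1,...,i_m,...,i_1.\<close>
definition blkidx :: "nat \<Rightarrow> nat \<Rightarrow> nat" where
  "blkidx m j = (if j \<le> m then j else 2 * m - j)"

text \<open>a^(i_1) b^(i_2) a^(i_3) ... (middle i_m) ... b^(i_2) a^(i_1): 2m-1 alternating blocks.\<close>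
definition blocks :: "(nat \<Rightarrow> nat) \<Rightarrow> nat \<Rightarrow> letter list" where
  "blocks i m = concat (map (\<lambda>j. replicate (i (blkidx m j)) (if odd j then La else Lb)) [1..<2 * m])"

end

theory Submission
  imports Defs "HOL-Analysis.Product_Vector"
begin

(*
  Since F has inverse R F R and z_1 = (1,0) = R z_n, the reflection R reverses the boundary
  segment: z_(t+1) = R z_(n-t).  In particular x(z_t) = x(z_(n-t)), and as the orbit does not
  meet the y-axis strictly between times 0 and n, the reduced word w_1 ... w_(n-1) is a
  palindrome; its maximal runs therefore form 2m-1 alternating blocks with mirrored exponents.
  Non-periodicity makes t |-> z_t injective, so z_t lies in Fix(R) only for 2t = n+1 and in
  Fix(F R) only for 2t = n+2: the middle point of the segment, or the point just after it.
  Its letter is read off the middle block or the block following it.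
*)

section \<open>Runs of a word\<close>

fun runs :: "'a list \<Rightarrow> ('a \<times> nat) list" where
  "runs [] = []"
| "runs (x # xs) = (case runs xs of [] \<Rightarrow> [(x, 1)]
     | (y, k) # r \<Rightarrow> if x = y then (y, Suc k) # r else (x, 1) # (y, k) # r)"

definition expand_runs :: "('a \<times> nat) list \<Rightarrow> 'a list" where
  "expand_runs R = concat (map (\<lambda>(x, k). replicate k x) R)"

fun alternating :: "('a \<times> nat) list \<Rightarrow> bool" where
  "alternating (p # q # r) = (fst p \<noteq> fst q \<and> alternating (q # r))"
| "alternating _ = True"

definition changes :: "'a list \<Rightarrow> nat" where
  "changes w = card {t. Suc t < length w \<and> w ! t \<noteq> w ! Suc t}"

lemma expand_runs_simps [simp]:
  "expand_runs [] = []"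
  "expand_runs ((x, k) # R) = replicate k x @ expand_runs R"
  by (simp_all add: expand_runs_def)

lemma expand_runs_rev: "expand_runs (rev R) = rev (expand_runs R)"
  by (induction R) (auto simp: expand_runs_def)

lemma expand_runs_runs: "expand_runs (runs u) = u"
  by (induction u) (auto split: list.split prod.split)

lemma runs_nonempty: "xs \<noteq> [] \<Longrightarrow> runs xs \<noteq> [] \<and> fst (hd (runs xs)) = hd xs"
  by (induction xs) (auto split: list.split prod.split)

lemma runs_positive: "p \<in> set (runs u) \<Longrightarrow> 0 < snd p"
  by (induction u arbitrary: p) (fastforce split: list.splits prod.splits if_splits)+

lemma alternating_runs: "alternating (runs u)"
proof (induction u)
  case (Cons x xs)
  then show ?case
    by (cases "runs xs" rule: remdups_adj.cases) (auto split: prod.split)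
qed simp

lemma alternating_iff_nth:
  "alternating R \<longleftrightarrow> (\<forall>j. Suc j < length R \<longrightarrow> fst (R ! j) \<noteq> fst (R ! Suc j))"
proof (induction R rule: alternating.induct)
  case (1 p q r)
  have "(\<forall>j. Suc j < length (p # q # r) \<longrightarrow> fst ((p # q # r) ! j) \<noteq> fst ((p # q # r) ! Suc j))
      \<longleftrightarrow> fst p \<noteq> fst q \<and> (\<forall>j. Suc j < length (q # r) \<longrightarrow> fst ((q # r) ! j) \<noteq> fst ((q # r) ! Suc j))"
    by (auto simp: All_less_Suc2 less_Suc_eq_0_disj)
  then show ?case using 1 by simp
qed auto

lemma alternating_rev: "alternating R \<Longrightarrow> alternating (rev R)"
  unfolding alternating_iff_nth
proof (intro allI impI)
  fix j assume alt: "\<forall>j. Suc j < length R \<longrightarrow> fst (R ! j) \<noteq> fst (R ! Suc j)"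
    and j: "Suc j < length (rev R)"
  then have "fst (R ! (length R - Suc (Suc j))) \<noteq> fst (R ! Suc (length R - Suc (Suc j)))"
    by simp
  moreover have "Suc (length R - Suc (Suc j)) = length R - Suc j" using j by simp
  ultimately show "fst (rev R ! j) \<noteq> fst (rev R ! Suc j)" using j by (simp add: rev_nth)
qed

lemma alternating_letters:
  assumes "alternating R" "fst (R ! 0) = La" "j < length R"
  shows "fst (R ! j) = (if even j then La else Lb)"
  using assms(3)
proof (induction j)
  case (Suc j)
  have "fst (R ! j) \<noteq> fst (R ! Suc j)" using assms(1) Suc.prems by (simp add: alternating_iff_nth)
  then show ?case using Suc by (cases "fst (R ! Suc j)") (auto split: if_splits)
qed (use assms in simp)

lemma runs_replicate_append:
  "0 < k \<Longrightarrow> (v = [] \<or> hd v \<noteq> x) \<Longrightarrow> runs (replicate k x @ v) = (x, k) # runs v"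
proof (induction k)
  case (Suc k)
  show ?case
  proof (cases "k = 0")
    case True
    show ?thesis
    proof (cases v)
      case (Cons y r)
      then obtain k' rr where "runs v = (y, k') # rr"
        using runs_nonempty[of v] by (cases "runs v") auto
      then show ?thesis using True Suc.prems Cons by simp
    qed (use True in simp)
  qed (use Suc in simp)
qed simp

lemma runs_expand_runs:
  "alternating R \<Longrightarrow> \<forall>p\<in>set R. 0 < snd p \<Longrightarrow> runs (expand_runs R) = R"
proof (induction R)
  case (Cons p R)
  obtain x k where p: "p = (x, k)" by fastforce
  have "expand_runs R = [] \<or> hd (expand_runs R) \<noteq> x"
  proof (cases R)
    case (Cons q R')
    obtain y l where "q = (y, l)" by fastforce
    with Cons Cons.prems p show ?thesis by (cases l) auto
  qed simp
  moreover have "alternating R" using Cons.prems by (cases R) auto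
  ultimately show ?case using Cons p by (simp add: runs_replicate_append)
qed simp

lemma runs_palindrome: "rev u = u \<Longrightarrow> rev (runs u) = runs u"
proof -
  assume pal: "rev u = u"
  have "rev (runs u) = runs (expand_runs (rev (runs u)))"
    by (rule runs_expand_runs[symmetric]) (auto intro: alternating_rev alternating_runs runs_positive)
  also have "\<dots> = runs u" by (simp add: expand_runs_rev expand_runs_runs pal)
  finally show ?thesis .
qed

lemma changes_Cons_Cons: "changes (x # y # r) = changes (y # r) + (if x \<noteq> y then 1 else 0)"
proof -
  define A where "A = {t. Suc t < length (y # r) \<and> (y # r) ! t \<noteq> (y # r) ! Suc t}"
  have "{t. Suc t < length (x # y # r) \<and> (x # y # r) ! t \<noteq> (x # y # r) ! Suc t}
      = (if x \<noteq> y then {0} else {}) \<union> Suc ` A"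
  proof (rule set_eqI)
    fix t show "t \<in> {t. Suc t < length (x # y # r) \<and> (x # y # r) ! t \<noteq> (x # y # r) ! Suc t}
      \<longleftrightarrow> t \<in> (if x \<noteq> y then {0} else {}) \<union> Suc ` A"
      by (cases t) (auto simp: A_def)
  qed
  moreover have "finite A" unfolding A_def by (rule finite_subset[of _ "{..<length (y # r)}"]) auto
  then have "card ((if x \<noteq> y then {0} else {}) \<union> Suc ` A) = card A + (if x \<noteq> y then 1 else 0)"
    by (auto simp: card_image)
  ultimately show ?thesis unfolding changes_def A_def by simp
qed

lemma length_runs: "xs \<noteq> [] \<Longrightarrow> length (runs xs) = Suc (changes xs)"
proof (induction xs rule: remdups_adj.induct)
  case (3 x y r)
  then obtain k rr where "runs (y # r) = (y, k) # rr"
    using runs_nonempty[of "y # r"] by (cases "runs (y # r)") auto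
  with 3 show ?case by (simp add: changes_Cons_Cons)
qed (simp_all add: changes_def)

lemma occ_pair:
  "occ [x, y] w = card {t. Suc t < length w \<and> w ! t = x \<and> w ! Suc t = y}"
proof -
  have "take 2 (drop t w) = [w ! t, w ! Suc t]" if "Suc t < length w" for t
  proof -
    have "drop t w = w ! t # w ! Suc t # drop (Suc (Suc t)) w"
      using that by (simp add: Cons_nth_drop_Suc)
    then show ?thesis by (simp add: numeral_2_eq_2)
  qed
  then have "{t. t + 2 \<le> length w \<and> take 2 (drop t w) = [x, y]}
      = {t. Suc t < length w \<and> w ! t = x \<and> w ! Suc t = y}"
    by (auto simp: Suc_le_eq)
  then show ?thesis by (simp add: occ_def numeral_2_eq_2)
qed

lemma occ_La_Lb_add_occ_Lb_La: "occ [La, Lb] w + occ [Lb, La] w = changes w"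
proof -
  let ?S = "\<lambda>x y. {t. Suc t < length w \<and> w ! t = x \<and> w ! Suc t = y}"
  have "w ! t \<noteq> w ! Suc t \<longleftrightarrow> w ! t = La \<and> w ! Suc t = Lb \<or> w ! t = Lb \<and> w ! Suc t = La" for t
    by (cases "w ! t"; cases "w ! Suc t") auto
  then have "{t. Suc t < length w \<and> w ! t \<noteq> w ! Suc t} = ?S La Lb \<union> ?S Lb La"
    by auto
  moreover have "finite (?S x y)" for x y by (rule finite_subset[of _ "{..<length w}"]) auto
  ultimately show ?thesis by (simp add: occ_pair changes_def card_Un_disjoint disjoint_iff)
qed

definition blocks_left :: "(nat \<Rightarrow> nat) \<Rightarrow> nat \<Rightarrow> letter list" where
  "blocks_left i m = concat (map (\<lambda>j. replicate (i j) (if odd j then La else Lb)) [1..<m])"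

definition blocks_right :: "(nat \<Rightarrow> nat) \<Rightarrow> nat \<Rightarrow> letter list" where
  "blocks_right i m =
     concat (map (\<lambda>j. replicate (i (2 * m - j)) (if odd j then La else Lb)) [Suc m..<2 * m])"

lemma blocks_split:
  assumes "1 \<le> m"
  shows "blocks i m = blocks_left i m @ replicate (i m) (if odd m then La else Lb) @ blocks_right i m"
proof -
  have upt: "[1..<2 * m] = [1..<m] @ m # [Suc m..<2 * m]"
    using assms upt_add_eq_append[of 1 m m] by (simp add: mult_2 upt_conv_Cons)
  have left: "map (\<lambda>j. replicate (i (blkidx m j)) (if odd j then La else Lb)) [1..<m]
      = map (\<lambda>j. replicate (i j) (if odd j then La else Lb)) [1..<m]"
    by (auto simp: blkidx_def)
  have right: "map (\<lambda>j. replicate (i (blkidx m j)) (if odd j then La else Lb)) [Suc m..<2 * m]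
      = map (\<lambda>j. replicate (i (2 * m - j)) (if odd j then La else Lb)) [Suc m..<2 * m]"
    by (auto simp: blkidx_def)
  show ?thesis
    unfolding blocks_def upt map_append list.map concat_append left right concat.simps
      blocks_left_def[symmetric] blocks_right_def[symmetric]
    by (simp add: blkidx_def)
qed

lemma length_blocks_left: "length (blocks_left i m) = (\<Sum>k=1..<m. i k)"
  by (simp add: blocks_left_def length_concat comp_def sum_set_upt_conv_sum_list_nat[symmetric])

lemma length_blocks_right: "length (blocks_right i m) = (\<Sum>k=1..<m. i k)"
proof -
  have "length (blocks_right i m) = (\<Sum>j=Suc m..<2 * m. i (2 * m - j))"
    by (simp add: blocks_right_def length_concat comp_def sum_set_upt_conv_sum_list_nat[symmetric])
  also have "\<dots> = (\<Sum>k=1..<m. i k)"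
    by (rule sum.reindex_bij_witness[of _ "\<lambda>k. 2 * m - k" "\<lambda>j. 2 * m - j"]) auto
  finally show ?thesis .
qed

lemma length_blocks: "1 \<le> m \<Longrightarrow> length (blocks i m) = i m + 2 * (\<Sum>k=1..<m. i k)"
  by (simp add: blocks_split length_blocks_left length_blocks_right)

lemma nth_blocks_middle:
  assumes "1 \<le> m" "(\<Sum>k=1..<m. i k) \<le> p" "p < (\<Sum>k=1..<m. i k) + i m"
  shows "blocks i m ! p = (if odd m then La else Lb)"
proof -
  have "p - length (blocks_left i m) < i m" using assms by (simp add: length_blocks_left)
  then show ?thesis using assms by (simp add: blocks_split nth_append length_blocks_left)
qed

lemma nth_blocks_after_middle:
  assumes "2 \<le> m" "0 < i (m - 1)"
  shows "blocks i m ! ((\<Sum>k=1..<m. i k) + i m) = (if even m then La else Lb)"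
proof -
  have "[Suc m..<2 * m] = Suc m # [Suc (Suc m)..<2 * m]" "2 * m - Suc m = m - 1"
    using assms(1) by (simp_all add: upt_conv_Cons)
  then have "blocks_right i m ! 0 = (if even m then La else Lb)"
    using assms by (simp add: blocks_right_def nth_append)
  then show ?thesis using assms by (simp add: blocks_split nth_append length_blocks_left)
qed

lemma palindrome_eq_blocks:
  assumes "u \<noteq> []" "hd u = La" "rev u = u" "Suc (changes u) = 2 * m - 1"
  shows "\<exists>i. (\<forall>k\<in>{1..m}. 1 \<le> i k) \<and> u = blocks i m"
proof -
  define R where "R = runs u"
  have len: "length R = 2 * m - 1" using length_runs[OF assms(1)] assms(4) by (simp add: R_def)
  have sym: "R ! (2 * m - 2 - p) = R ! p" if "p < 2 * m - 1" for p
  proof -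
    have "rev R ! p = R ! (length R - Suc p)" using that len by (simp add: rev_nth)
    then show ?thesis using runs_palindrome[OF assms(3), folded R_def] len by simp
  qed
  have "fst (R ! 0) = La" using runs_nonempty[OF assms(1)] assms(2) by (metis R_def hd_conv_nth)
  then have letters: "fst (R ! p) = (if odd (Suc p) then La else Lb)" if "p < length R" for p
    using alternating_letters[OF alternating_runs[of u, folded R_def]] that by simp
  define i where "i k = snd (R ! (k - 1))" for k
  have "\<forall>k\<in>{1..m}. 1 \<le> i k"
  proof
    fix k assume "k \<in> {1..m}"
    then have "R ! (k - 1) \<in> set R" using len by auto
    then show "1 \<le> i k" using runs_positive[of _ u] by (simp add: i_def R_def Suc_le_eq)
  qed
  moreover have "u = blocks i m"
  proof -
    have "u = concat (map (\<lambda>(x, k). replicate k x) R)"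
      using expand_runs_runs[of u] by (simp add: expand_runs_def R_def)
    also have "map (\<lambda>(x, k). replicate k x) R
        = map (\<lambda>j. replicate (i (blkidx m j)) (if odd j then La else Lb)) [1..<2 * m]"
    proof (rule nth_equalityI)
      fix p assume "p < length (map (\<lambda>(x, k). replicate k x) R)"
      then have p: "p < 2 * m - 1" using len by simp
      have "i (blkidx m (Suc p)) = snd (R ! p)"
        using sym[OF p] by (auto simp: blkidx_def i_def numeral_2_eq_2)
      then show "map (\<lambda>(x, k). replicate k x) R ! p
          = map (\<lambda>j. replicate (i (blkidx m j)) (if odd j then La else Lb)) [1..<2 * m] ! p"
        using letters[of p] p len by (cases "R ! p") simp
    qed (use len in simp)
    finally show ?thesis by (simp add: blocks_def)
  qed
  ultimately show ?thesis by blast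
qed

section \<open>The orbit of the boundary point\<close>

context
  fixes a b :: real
begin

lemma zpt_0: "zpt a b 0 = (0, -1)"
  by (simp add: zpt_def)

lemma zpt_Suc_0: "zpt a b (Suc 0) = (1, 0)"
  by (simp add: zpt_def F_def domMa_def)

lemma zpt_Suc: "zpt a b (Suc t) = F a b (zpt a b t)"
  by (simp add: zpt_def)

lemma zpt_add: "zpt a b (s + k) = (F a b ^^ k) (zpt a b s)"
  by (induction k) (auto simp: zpt_Suc)

lemma snd_F: "snd (F a b p) = fst p"
  by (cases p) (simp add: F_def)

lemma Rf_Rf [simp]: "Rf (Rf p) = p"
  by (simp add: Rf_def)

lemma Rf_F_Rf_F: "Rf (F a b (Rf (F a b p))) = p"
  by (cases p) (auto simp: F_def Rf_def domMa_def)

lemma F_scaleR: "0 < c \<Longrightarrow> F a b (c *\<^sub>R p) = c *\<^sub>R F a b p"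
  by (cases p) (auto simp: F_def domMa_def algebra_simps zero_less_mult_iff mult_le_0_iff)

lemma funpow_F_scaleR: "0 < c \<Longrightarrow> (F a b ^^ k) (c *\<^sub>R p) = c *\<^sub>R (F a b ^^ k) p"
  by (induction k) (auto simp: F_scaleR)

lemma zpt_scaleR:
  "0 < c \<Longrightarrow> zpt a b s = c *\<^sub>R zpt a b r \<Longrightarrow> zpt a b (s + k) = c *\<^sub>R zpt a b (r + k)"
  by (simp add: zpt_add funpow_F_scaleR)

lemma funpow_F_origin: "(F a b ^^ k) (0, 0) = (0, 0)"
  by (induction k) (auto simp: F_def)

lemma zpt_inj:
  assumes "\<forall>k>0. (F a b ^^ k) (0, -1) \<noteq> (0, -1)"
  shows "inj (zpt a b)"
proof (rule injI)
  have backward: "((\<lambda>p. Rf (F a b (Rf p))) ^^ k) (zpt a b j) = zpt a b (j - k)" if "k \<le> j" for k j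
    using that
  proof (induction k)
    case (Suc k)
    then have "j - k = Suc (j - Suc k)" by simp
    with Suc show ?case by (simp add: zpt_Suc Rf_F_Rf_F)
  qed simp
  have "zpt a b s \<noteq> zpt a b r" if "r < s" for r s
  proof
    assume "zpt a b s = zpt a b r"
    then have "zpt a b (s - r) = zpt a b 0" using backward[of r s] backward[of r r] that by simp
    then show False using assms that by (simp add: zpt_def)
  qed
  then show "zpt a b s = zpt a b r \<Longrightarrow> s = r" for s r by (metis linorder_neqE_nat)
qed

end

locale boundary_orbit =
  fixes a b :: real and n :: nat
  assumes nonperiodic: "\<forall>k>0. (F a b ^^ k) (0, -1) \<noteq> (0, -1)"
    and reaches: "(F a b ^^ n) (0, -1) = (0, 1)"
begin

lemma zpt_n: "zpt a b n = (0, 1)"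
  using reaches by (simp add: zpt_def)

lemma zpt_eq_iff: "zpt a b s = zpt a b t \<longleftrightarrow> s = t"
  using zpt_inj[OF nonperiodic] by (auto dest: injD)

lemma two_le_n: "2 \<le> n"
proof (rule ccontr)
  assume "\<not> 2 \<le> n"
  then have "n = 0 \<or> n = Suc 0" by auto
  then show False using zpt_n zpt_0[of a b] zpt_Suc_0[of a b] by auto
qed

lemma zpt_Suc_reverse: "k \<le> n \<Longrightarrow> zpt a b (Suc k) = Rf (zpt a b (n - k))"
proof (induction k)
  case 0
  then show ?case using zpt_n zpt_Suc_0[of a b] by (simp add: Rf_def)
next
  case (Suc k)
  then have "n - k = Suc (n - Suc k)" by simp
  with Suc have "zpt a b (Suc (Suc k)) = F a b (Rf (F a b (zpt a b (n - Suc k))))"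
    by (simp add: zpt_Suc)
  also have "\<dots> = Rf (zpt a b (n - Suc k))"
    by (metis Rf_F_Rf_F Rf_Rf)
  finally show ?case .
qed

lemma fst_zpt_reverse: "t < n \<Longrightarrow> fst (zpt a b (n - t)) = fst (zpt a b t)"
proof -
  assume "t < n"
  then have "snd (zpt a b (Suc t)) = fst (zpt a b (n - t))"
    using zpt_Suc_reverse[of t] by (simp add: Rf_def)
  then show ?thesis by (simp add: zpt_Suc snd_F)
qed

lemma Rf_zpt: "t \<le> n \<Longrightarrow> Rf (zpt a b t) = zpt a b (Suc n - t)"
  using zpt_Suc_reverse[of "n - t"] by (simp add: Rf_def Suc_diff_le)

lemma zpt_in_FixR_iff: "t \<le> n \<Longrightarrow> zpt a b t \<in> FixR \<longleftrightarrow> 2 * t = n + 1"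
  by (auto simp: FixR_def Rf_zpt zpt_eq_iff)

lemma zpt_in_FixFR_iff: "t \<le> n \<Longrightarrow> zpt a b t \<in> FixFR a b \<longleftrightarrow> 2 * t = n + 2"
  by (auto simp: FixFR_def Rf_zpt zpt_Suc[symmetric] zpt_eq_iff)

lemma card_FixR: "card {t. t \<le> n \<and> zpt a b t \<in> FixR} = 1 \<longleftrightarrow> odd n"
proof -
  have "{t. t \<le> n \<and> zpt a b t \<in> FixR} = {t. t \<le> n \<and> 2 * t = n + 1}"
    using zpt_in_FixR_iff by blast
  also have "\<dots> = (if odd n then {(n + 1) div 2} else {})"
    by auto presburger+
  finally show ?thesis by simp
qed

lemma card_FixFR: "card {t. t \<le> n \<and> zpt a b t \<in> FixFR a b} = 1 \<longleftrightarrow> even n"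
proof -
  have "{t. t \<le> n \<and> zpt a b t \<in> FixFR a b} = {t. t \<le> n \<and> 2 * t = n + 2}"
    using zpt_in_FixFR_iff by blast
  also have "\<dots> = (if even n then {n div 2 + 1} else {})"
    using two_le_n by auto presburger+
  finally show ?thesis by simp
qed

text \<open>
  By positive homogeneity of F, a point \<open>(0, y)\<close> strictly inside the segment starts a scaled
  copy of the orbit of \<open>(0,-1)\<close> if \<open>y < 0\<close>; if \<open>y > 0\<close>, its mirror point \<open>(y, 0)\<close> starts a
  scaled copy of the orbit of \<open>(1,0)\<close>.  Either way the orbit would repeat a point.
\<close>

lemma fst_zpt_nonzero:
  assumes "0 < t" "t < n"
  shows "fst (zpt a b t) \<noteq> 0"
proof
  assume "fst (zpt a b t) = 0"
  then obtain y where zt: "zpt a b t = (0, y)" by (metis prod.collapse)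
  have mirror: "zpt a b (Suc n - t) = (y, 0)" using Rf_zpt[of t] assms zt by (simp add: Rf_def)
  consider "y = 0" | "y < 0" | "y > 0" by linarith
  then show False
  proof cases
    case 1
    then have "zpt a b (t + (n - t)) = (0, 0)" using zt by (simp add: zpt_add funpow_F_origin)
    then show False using assms zpt_n by simp
  next
    case 2
    have "zpt a b t = (- y) *\<^sub>R zpt a b 0" using zt by (simp add: zpt_0)
    then have "zpt a b (t + Suc n) = (- y) *\<^sub>R zpt a b (0 + Suc n)"
      by (rule zpt_scaleR[rotated]) (use 2 in simp)
    also have "\<dots> = zpt a b (Suc n - t)"
    proof -
      have "zpt a b (Suc n) = (-1, 0)" using Rf_zpt[of 0] by (simp add: zpt_0 Rf_def)
      then show ?thesis using mirror by simp
    qed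
    finally show False using assms by (simp add: zpt_eq_iff)
  next
    case 3
    have "zpt a b (Suc n - t) = y *\<^sub>R zpt a b 1" using mirror by (simp add: zpt_Suc_0)
    then have "zpt a b (Suc n - t + (n - 1)) = y *\<^sub>R zpt a b (1 + (n - 1))"
      using zpt_scaleR[of y] 3 by blast
    also have "\<dots> = zpt a b t" using zt zpt_n assms by simp
    finally show False using assms by (simp add: zpt_eq_iff)
  qed
qed

lemma nth_bword: "t < n \<Longrightarrow> bword a b n ! t = (if zpt a b t \<in> domMa then La else Lb)"
  by (simp add: bword_def)

lemma bword_Cons: "bword a b n = La # drop 1 (bword a b n)"
proof -
  have "bword a b n ! 0 = La" using two_le_n nth_bword[of 0] by (simp add: zpt_0 domMa_def)
  moreover have "bword a b n \<noteq> []" using two_le_n by (simp add: bword_def)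
  ultimately show ?thesis by (cases "bword a b n") auto
qed

lemma hd_reduced_bword: "drop 1 (bword a b n) \<noteq> [] \<and> hd (drop 1 (bword a b n)) = La"
  using two_le_n nth_bword[of 1] by (auto simp: bword_def hd_drop_conv_nth zpt_Suc_0 domMa_def)

lemma zpt_in_domMa_iff:
  "0 < t \<Longrightarrow> t < n \<Longrightarrow> zpt a b t \<in> domMa \<longleftrightarrow> drop 1 (bword a b n) ! (t - 1) = La"
  by (simp add: bword_def)

lemma reduced_bword_palindrome: "rev (drop 1 (bword a b n)) = drop 1 (bword a b n)"
proof (rule nth_equalityI)
  fix p assume "p < length (rev (drop 1 (bword a b n)))"
  then have p: "Suc p < n" by (simp add: bword_def)
  have "fst (zpt a b (n - Suc p)) = fst (zpt a b (Suc p))"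
    using fst_zpt_reverse p by simp
  moreover have "fst (zpt a b (Suc p)) \<noteq> 0" "fst (zpt a b (n - Suc p)) \<noteq> 0"
    using fst_zpt_nonzero p by auto
  ultimately have "zpt a b (n - Suc p) \<in> domMa \<longleftrightarrow> zpt a b (Suc p) \<in> domMa"
    by (auto simp: domMa_def split: prod.splits)
  moreover have "Suc (n - Suc (Suc p)) = n - Suc p" using p by simp
  ultimately show "rev (drop 1 (bword a b n)) ! p = drop 1 (bword a b n) ! p"
    using p by (simp add: bword_def rev_nth)
qed simp

lemma rank_bword: "rank (bword a b n) = Suc (changes (drop 1 (bword a b n)))"
proof -
  obtain r where "drop 1 (bword a b n) = La # r"
    using hd_reduced_bword by (cases "drop 1 (bword a b n)") auto
  then show ?thesis
    using bword_Cons occ_La_Lb_add_occ_Lb_La[of "bword a b n"] by (simp add: rank_def changes_Cons_Cons)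
qed

lemma reduced_bword_eq_blocks:
  assumes "rank (bword a b n) = 2 * m - 1"
  shows "\<exists>i. (\<forall>k\<in>{1..m}. 1 \<le> i k) \<and> drop 1 (bword a b n) = blocks i m"
  using palindrome_eq_blocks hd_reduced_bword reduced_bword_palindrome rank_bword assms by auto

context
  fixes i :: "nat \<Rightarrow> nat" and m :: nat
  assumes reduced_bword: "drop 1 (bword a b n) = blocks i m"
    and m_pos: "1 \<le> m" and i_pos: "\<forall>k\<in>{1..m}. 1 \<le> i k"
begin

lemma length_reduced_bword: "i m + 2 * (\<Sum>k=1..<m. i k) = n - 1"
proof -
  have "length (drop 1 (bword a b n)) = n - 1" by (simp add: bword_def)
  then show ?thesis using length_blocks[OF m_pos, of i] reduced_bword by metis
qed

lemma reduced_bword_letter: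
  assumes "0 < t" "t < n"
  shows "zpt a b t \<in> domMa \<longleftrightarrow> blocks i m ! (t - 1) = La"
  using zpt_in_domMa_iff[OF assms] reduced_bword by simp

lemma FixR_in_domMa_iff:
  assumes "t \<le> n" "zpt a b t \<in> FixR"
  shows "zpt a b t \<in> domMa \<longleftrightarrow> odd m"
proof -
  have t: "2 * t = n + 1" using zpt_in_FixR_iff assms by blast
  have "1 \<le> i m" using i_pos m_pos by simp
  then have "(\<Sum>k=1..<m. i k) \<le> t - 1" "t - 1 < (\<Sum>k=1..<m. i k) + i m" "0 < t" "t < n"
    using t length_reduced_bword two_le_n by linarith+
  then show ?thesis using reduced_bword_letter nth_blocks_middle[OF m_pos] by simp
qed

lemma FixFR_in_domMa_iff:
  assumes "t \<le> n" "zpt a b t \<in> FixFR a b"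
  shows "zpt a b t \<in> domMa \<longleftrightarrow> (i m = 1 \<and> even m) \<or> (1 < i m \<and> odd m)"
proof -
  have t: "2 * t = n + 2" using zpt_in_FixFR_iff assms by blast
  have "odd (i m)" using t length_reduced_bword two_le_n by presburger
  moreover have "1 \<le> i m" using i_pos m_pos by simp
  ultimately have "i m = 1 \<or> 3 \<le> i m" by presburger
  then consider "i m = 1" "m = 1" | "i m = 1" "2 \<le> m" | "3 \<le> i m" using m_pos by linarith
  then show ?thesis
  proof cases
    case 1
    then have "t = n" using t length_reduced_bword by simp
    then show ?thesis using 1 zpt_n by (simp add: domMa_def)
  next
    case 2
    have "1 \<le> i (m - 1)" using i_pos 2 by simp
    moreover have "i (m - 1) \<le> (\<Sum>k=1..<m. i k)" using 2 by (intro member_le_sum) auto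
    ultimately have "t - 1 = (\<Sum>k=1..<m. i k) + i m" "0 < t" "t < n"
      using t length_reduced_bword 2 by linarith+
    then show ?thesis
      using 2 reduced_bword_letter nth_blocks_after_middle[of m i] \<open>1 \<le> i (m - 1)\<close> by simp
  next
    case 3
    then have "(\<Sum>k=1..<m. i k) \<le> t - 1" "t - 1 < (\<Sum>k=1..<m. i k) + i m" "0 < t" "t < n"
      using t length_reduced_bword two_le_n by linarith+
    then show ?thesis using 3 reduced_bword_letter nth_blocks_middle[OF m_pos] by simp
  qed
qed

end

end

theorem mainTheorem4:
  fixes a b :: real and n m :: nat
  assumes nonper: "\<forall>k>0. (F a b ^^ k) (0, -1) \<noteq> (0, -1)"
    and reach: "(F a b ^^ n) (0, -1) = (0, 1)"
    and rk: "rank (bword a b n) = 2 * m - 1"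
  shows "\<exists>i :: nat \<Rightarrow> nat.
     (\<forall>k\<in>{1..m}. 1 \<le> i k)
   \<and> drop 1 (bword a b n) = blocks i m
   \<and> rev (drop 1 (bword a b n)) = drop 1 (bword a b n)
   \<and> i m + 2 * (\<Sum>k=1..<m. i k) = n - 1
   \<and> ((odd n \<and> even (i m)) \<longleftrightarrow> card {t. t \<le> n \<and> zpt a b t \<in> FixR} = 1)
   \<and> (\<forall>t\<le>n. card {s. s \<le> n \<and> zpt a b s \<in> FixR} = 1 \<and> zpt a b t \<in> FixR \<longrightarrow>
        (zpt a b t \<in> domMa \<longrightarrow> odd m) \<and> (zpt a b t \<in> domMb \<longrightarrow> even m))
   \<and> ((even n \<and> odd (i m)) \<longleftrightarrow> card {t. t \<le> n \<and> zpt a b t \<in> FixFR a b} = 1)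
   \<and> (\<forall>t\<le>n. card {s. s \<le> n \<and> zpt a b s \<in> FixFR a b} = 1 \<and> zpt a b t \<in> FixFR a b \<longrightarrow>
        (((i m = 1 \<and> even m) \<or> (i m > 1 \<and> odd m)) \<longrightarrow> zpt a b t \<in> domMa)
      \<and> (((i m = 1 \<and> odd m) \<or> (i m > 1 \<and> even m)) \<longrightarrow> zpt a b t \<in> domMb))"
proof -
  interpret boundary_orbit a b n
    using nonper reach by unfold_locales
  have m: "1 \<le> m" using rk by (simp add: rank_def)
  obtain i where i: "\<forall>k\<in>{1..m}. 1 \<le> i k" and w: "drop 1 (bword a b n) = blocks i m"
    using reduced_bword_eq_blocks[OF rk] by blast
  note len = length_reduced_bword[OF w m i]
  have "odd n \<longleftrightarrow> even (i m)" using len two_le_n by presburger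
  then show ?thesis
    using i w len reduced_bword_palindrome card_FixR card_FixFR
      FixR_in_domMa_iff[OF w m i] FixFR_in_domMa_iff[OF w m i]
    by (intro exI[of _ i]) (auto simp: domMb_def)
qed

end
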